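(* Let $\tau\in\mathbb{Z}$ and let $m_1,m_2\geq 1$ be integers. Define $$n_{(m_1,m_2)}(\tau)=\frac{1}{m_1+m_2}\sum_{d\mid m_1,\ d\mid m_2}\mu(d)\,(-1)^{(m_1+m_2)(\tau+1)/d}\binom{(m_1\tau+m_1)/d-1}{m_1/d}\binom{(m_2\tau+m_2)/d}{m_2/d},$$ where $\mu$ is the Möbius function and the sum runs over positive common divisors $d$ of $m_1,m_2$. Then $n_{(m_1,m_2)}(\tau)\in\mathbb{Z}$.
   Context: For integers $b\geq 0$ and $a\in\mathbb{Z}$ the binomial coefficient is defined by: $\binom{a}{b}=1$ if $b=0$; $\binom{a}{b}$ is the usual binomial coefficient if $b\geq 1$ and $a\geq 0$; and $\binom{a}{b}=(-1)^b\binom{-a+b-1}{b}$ if $b\geq1$ and $a<0$. *)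

theory Defs
  imports Complex_Main "HOL-Computational_Algebra.Primes" "HOL-Computational_Algebra.Squarefree"
begin

definition binom_int :: "int \<Rightarrow> nat \<Rightarrow> int" where
  "binom_int a b =
     (if b = 0 then 1
      else if a \<ge> 0 then int (nat a choose b)
      else (-1) ^ b * int (nat (- a + int b - 1) choose b))"

definition moebius :: "nat \<Rightarrow> int" where
  "moebius d = (if squarefree d then (-1) ^ card (prime_factors d) else 0)"

definition neg_one_pow :: "int \<Rightarrow> int" where
  "neg_one_pow k = (if even k then 1 else -1)"

definition n_DT :: "nat \<Rightarrow> nat \<Rightarrow> int \<Rightarrow> real" where
  "n_DT m1 m2 \<tau> =
     (1 / real (m1 + m2)) *
     (\<Sum>d\<in>{d. d dvd m1 \<and> d dvd m2}.
        real_of_int (moebius d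
          * neg_one_pow ((int m1 + int m2) * (\<tau> + 1) div int d)
          * binom_int ((int m1 * \<tau> + int m1) div int d - 1) (m1 div d)
          * binom_int ((int m2 * \<tau> + int m2) div int d) (m2 div d)))"

end

theory Submission
  imports Defs "HOL-Number_Theory.Cong"
begin

(* Write A = m1 div d, B = m2 div d and t = tau + 1.  For tau >= 0 the d-th summand is
   mu(d) (-1)^((A+B)t) P(t,A,B) with P(t,A,B) = C(At-1,A) C(Bt,B); for tau < 0 upper negation of the
   binomial coefficients gives the same shape with m1, m2 exchanged and t = -tau.  It suffices that
   p^k divides the sum whenever p^k divides m1 + m2.

   If p does not divide both m1 and m2, every term is divisible by p^k: then p^k | A + B, p does not
   divide A, and at each of the digits 1..k a carry occurs in one of the additions A + (At-1-A) and
   B + (Bt-B), so Kummer's theorem gives p^k | P(t,A,B).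

   Otherwise the Moebius function pairs each divisor e prime to p with pe, and the pair contributes
   mu(e) times a difference that vanishes modulo p^k by the congruence P(t,pA,pB) = P(t,A,B)
   (mod p^k) for p^k | p(A+B); for p = 2 the signs can differ, but then k <= 1 and -1 = 1 (mod 2).  For this, let W(n) be the product of the j <= n prime to p.  Then
   C(pn,pk) W(pk) W(p(n-k)) = C(n,k) W(pn), and modulo p^k we have W(x + M) = W(x) W(M) for
   M = p(A+B) together with a reflection formula for j -> M - j; these give
   W(pA) W(pB) W(pA(t-1)) W(pB(t-1)) = W(pAt) W(pBt), and all these W are units modulo p^k. *)

lemma less_power_base:
  fixes b :: nat assumes "2 \<le> b"
  shows "k < b ^ k"
proof -
  have "k < 2 ^ k" by (rule less_exp)
  also have "\<dots> \<le> b ^ k"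
    using assms by (intro power_mono) auto
  finally show ?thesis .
qed

lemma card_prime_powers_dvd:
  fixes p m K :: nat assumes "prime p" "0 < m" "m \<le> K"
  shows "card {i \<in> {1..K}. p ^ i dvd m} = multiplicity p m"
proof -
  have "p ^ multiplicity p m \<le> m"
    using assms(2) by (intro dvd_imp_le multiplicity_dvd)
  then have "multiplicity p m \<le> K"
    using less_power_base[OF prime_ge_2_nat[OF assms(1)], of "multiplicity p m"] assms(3) by linarith
  moreover have dvd_iff: "p ^ i dvd m \<longleftrightarrow> i \<le> multiplicity p m" for i
    using assms(1,2) by (intro power_dvd_iff_le_multiplicity) auto
  ultimately have "{i \<in> {1..K}. p ^ i dvd m} = {1..multiplicity p m}"
    by (simp only: dvd_iff) auto
  then show ?thesis by simp
qed

theorem multiplicity_fact_Legendre: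
  fixes p n K :: nat assumes "prime p" "n \<le> K"
  shows "multiplicity p (fact n) = (\<Sum>i=1..K. n div p ^ i)"
  using assms(2)
proof (induction n)
  case 0
  then show ?case by simp
next
  case (Suc n)
  have "multiplicity p (fact (Suc n) :: nat) = multiplicity p (Suc n * fact n)"
    by (simp only: fact_Suc of_nat_id)
  also have "\<dots> = multiplicity p (Suc n) + multiplicity p (fact n :: nat)"
    using assms(1) by (intro prime_elem_multiplicity_mult_distrib) auto
  also have "multiplicity p (Suc n) = card {i \<in> {1..K}. p ^ i dvd Suc n}"
    using card_prime_powers_dvd[OF assms(1)] Suc.prems by simp
  also have "multiplicity p (fact n :: nat) = (\<Sum>i=1..K. n div p ^ i)"
    using Suc by simp
  also have "card {i \<in> {1..K}. p ^ i dvd Suc n} + (\<Sum>i=1..K. n div p ^ i)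
      = (\<Sum>i=1..K. (if p ^ i dvd Suc n then 1 else 0) + n div p ^ i)"
    by (simp add: sum.distrib sum.If_cases Int_def)
  also have "\<dots> = (\<Sum>i=1..K. Suc n div p ^ i)"
    by (intro sum.cong refl) (auto simp: div_Suc dvd_eq_mod_eq_0)
  finally show ?case .
qed

(* For q = p ^ i this is the carry into digit i when a and b are added in base p. *)
definition carry :: "nat \<Rightarrow> nat \<Rightarrow> nat \<Rightarrow> nat" where
  "carry q a b = (a mod q + b mod q) div q"

theorem multiplicity_binomial_Kummer:
  fixes p a b K :: nat assumes "prime p" "a + b \<le> K"
  shows "multiplicity p (a + b choose a) = (\<Sum>i=1..K. carry (p ^ i) a b)"
proof -
  have "fact (a + b) = fact a * fact b * (a + b choose a :: nat)"
    using binomial_fact_lemma[of a "a + b"] by (simp add: ac_simps)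
  then have "multiplicity p (fact (a + b) :: nat)
      = multiplicity p (fact a :: nat) + multiplicity p (fact b :: nat) + multiplicity p (a + b choose a)"
    using assms(1) by (simp add: prime_elem_multiplicity_mult_distrib)
  also have "multiplicity p (fact (a + b) :: nat)
      = (\<Sum>i=1..K. a div p ^ i + b div p ^ i + carry (p ^ i) a b)"
    unfolding multiplicity_fact_Legendre[OF assms] carry_def by (intro sum.cong refl div_add1_eq)
  also have "multiplicity p (fact a :: nat) = (\<Sum>i=1..K. a div p ^ i)"
    using assms by (intro multiplicity_fact_Legendre) auto
  also have "multiplicity p (fact b :: nat) = (\<Sum>i=1..K. b div p ^ i)"
    using assms by (intro multiplicity_fact_Legendre) auto
  finally show ?thesis by (simp add: sum.distrib)
qed

lemma carry_in_complementary_sums: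
  fixes q a b c d :: nat
  assumes "q dvd a + b" "q dvd c + d + 1" "\<not> q dvd a"
  shows "1 \<le> carry q a c + carry q b d"
proof (rule ccontr)
  assume no_carry: "\<not> ?thesis"
  have q: "0 < q" using assms(1,3) by (cases q) auto
  have eq_q: "n = q" if "q dvd n" "0 < n" "n < 2 * q" for n
  proof -
    have "n = q * (n div q)" using that(1) by simp
    moreover have "n div q < 2" using that(3) q by (simp add: div_less_iff_less_mult)
    ultimately show ?thesis using that(2) by (cases "n div q") auto
  qed
  have lt: "a mod q < q" "b mod q < q" "c mod q < q" "d mod q < q"
    using q by simp_all
  have "a mod q \<noteq> 0" using assms(3) by (simp add: mod_eq_0_iff_dvd)
  moreover have "q dvd a mod q + b mod q"
    using assms(1) by (simp add: dvd_eq_mod_eq_0 mod_simps)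
  ultimately have "a mod q + b mod q = q"
    by (intro eq_q) (use lt in linarith)+
  moreover have "(c mod q + d mod q + 1) mod q = (c + d + 1) mod q"
    by (metis mod_add_eq mod_add_left_eq)
  then have "q dvd c mod q + d mod q + 1"
    using assms(2) by (simp add: dvd_eq_mod_eq_0)
  then have "c mod q + d mod q + 1 = q"
    by (intro eq_q) (use lt in linarith)+
  moreover have "carry q a c = 0" "carry q b d = 0"
    using no_carry by linarith+
  then have "a mod q + c mod q < q" "b mod q + d mod q < q"
    using q by (simp_all add: carry_def div_eq_0_iff)
  ultimately show False by linarith
qed

definition binom_pair :: "nat \<Rightarrow> nat \<Rightarrow> nat \<Rightarrow> nat" where
  "binom_pair t A B = (A * t - 1 choose A) * (B * t choose B)"

lemma multiplicity_binom_pair: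
  fixes p t A B K :: nat
  assumes "prime p" "2 \<le> t" "1 \<le> A" "A * t + B * t \<le> K"
  shows "multiplicity p (binom_pair t A B)
       = (\<Sum>i=1..K. carry (p ^ i) A (A * t - 1 - A) + carry (p ^ i) B (B * t - B))"
proof -
  have At: "A \<le> A * t - 1"
    using assms(2,3) mult_le_mono2[OF assms(2), of A] by linarith
  have Bt: "B \<le> B * t" using assms(2) by simp
  have "A + (A * t - 1 - A) = A * t - 1" "B + (B * t - B) = B * t"
    using At Bt by linarith+
  moreover have "multiplicity p (A + (A * t - 1 - A) choose A)
      = (\<Sum>i=1..K. carry (p ^ i) A (A * t - 1 - A))"
    using At assms(4) by (intro multiplicity_binomial_Kummer[OF assms(1)]) simp
  moreover have "multiplicity p (B + (B * t - B) choose B) = (\<Sum>i=1..K. carry (p ^ i) B (B * t - B))"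
    using Bt assms(4) by (intro multiplicity_binomial_Kummer[OF assms(1)]) simp
  moreover have "multiplicity p (binom_pair t A B)
      = multiplicity p (A * t - 1 choose A) + multiplicity p (B * t choose B)"
    unfolding binom_pair_def using assms(1) At Bt
    by (subst prime_elem_multiplicity_mult_distrib) auto
  ultimately show ?thesis by (simp add: sum.distrib)
qed

lemma carry_binom_pair_pos:
  fixes q t A B :: nat
  assumes "2 \<le> t" "q dvd A + B" "\<not> q dvd A"
  shows "1 \<le> carry q A (A * t - 1 - A) + carry q B (B * t - B)"
proof (rule carry_in_complementary_sums[OF assms(2) _ assms(3)])
  have "1 \<le> A" using assms(3) by (cases A) auto
  then have "A + 1 \<le> A * t" using mult_le_mono2[OF assms(1), of A] by linarith
  moreover have "B \<le> B * t" using assms(1) by simp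
  moreover have "(A + B) * (t - 1) = A * t + B * t - (A + B)"
    by (simp add: algebra_simps diff_mult_distrib2)
  ultimately have "A * t - 1 - A + (B * t - B) + 1 = (A + B) * (t - 1)"
    by linarith
  then show "q dvd A * t - 1 - A + (B * t - B) + 1"
    using assms(2) by simp
qed

lemma prime_power_dvd_binom_pair:
  fixes p k t A B :: nat
  assumes p: "prime p" and t: "1 \<le> t" and A: "1 \<le> A"
    and dvd: "p ^ k dvd A + B" and not_both: "\<not> (p dvd A \<and> p dvd B)"
  shows "p ^ k dvd binom_pair t A B"
proof (cases "t = 1 \<or> k = 0")
  case True
  then show ?thesis using A by (auto simp: binom_pair_def binomial_eq_0)
next
  case False
  then have t2: "2 \<le> t" and k: "1 \<le> k" using t by auto
  have pow_dvd: "p ^ i dvd A + B" if "i \<le> k" for i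
    using that dvd le_imp_power_dvd dvd_trans by blast
  have "p dvd A + B" using pow_dvd[OF k] by simp
  then have not_dvd_A: "\<not> p dvd A" using not_both by (auto simp: dvd_add_right_iff)
  define K where "K = A * t + B * t"
  have "k < p ^ k" by (rule less_power_base[OF prime_ge_2_nat[OF p]])
  also have "\<dots> \<le> A + B" using dvd A by (intro dvd_imp_le) auto
  also have "\<dots> \<le> K" unfolding K_def using t by (intro add_mono) simp_all
  finally have "k \<le> K" by simp
  have "k = (\<Sum>i=1..k. 1)" by simp
  also have "\<dots> \<le> (\<Sum>i=1..k. carry (p ^ i) A (A * t - 1 - A) + carry (p ^ i) B (B * t - B))"
  proof (intro sum_mono carry_binom_pair_pos[OF t2])
    fix i assume i: "i \<in> {1..k}"
    then show "p ^ i dvd A + B" using pow_dvd by simp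
    show "\<not> p ^ i dvd A"
      using not_dvd_A i dvd_trans[OF dvd_power[of i p]] by auto
  qed
  also have "\<dots> \<le> (\<Sum>i=1..K. carry (p ^ i) A (A * t - 1 - A) + carry (p ^ i) B (B * t - B))"
    using \<open>k \<le> K\<close> by (intro sum_mono2) auto
  also have "\<dots> = multiplicity p (binom_pair t A B)"
    using multiplicity_binom_pair[OF p t2 A, of B K] by (simp add: K_def)
  finally show ?thesis by (rule multiplicity_dvd')
qed

definition pfree :: "nat \<Rightarrow> nat \<Rightarrow> int" where
  "pfree p j = (if p dvd j then 1 else int j)"

definition pfree_fact :: "nat \<Rightarrow> nat \<Rightarrow> int" where
  "pfree_fact p n = (\<Prod>j=1..n. pfree p j)"

lemma pfree_fact_0 [simp]: "pfree_fact p 0 = 1"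
  by (simp add: pfree_fact_def)

lemma pfree_fact_Suc: "pfree_fact p (Suc n) = pfree_fact p n * pfree p (Suc n)"
  by (simp add: pfree_fact_def)

lemma pfree_fact_eq_prod_lessThan:
  assumes "p dvd n"
  shows "pfree_fact p n = (\<Prod>i<n. pfree p i)"
proof (cases n)
  case 0
  then show ?thesis by (simp add: pfree_fact_def)
next
  case (Suc m)
  have "(\<Prod>i<n. pfree p i) = pfree p 0 * (\<Prod>i<m. pfree p (Suc i))"
    unfolding Suc by (rule prod.lessThan_Suc_shift)
  also have "(\<Prod>i<m. pfree p (Suc i)) = (\<Prod>j=1..m. pfree p j)"
    by (simp add: prod.atLeast1_atMost_eq)
  finally show ?thesis
    using assms by (simp add: Suc pfree_fact_Suc pfree_fact_def pfree_def)
qed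

lemma coprime_pfree_fact:
  assumes "prime p"
  shows "coprime (pfree_fact p n) (int p ^ s)"
proof -
  have "coprime (pfree p j) (int p)" for j
    using prime_imp_coprime[OF assms, of j] by (simp add: pfree_def coprime_commute)
  then show ?thesis
    unfolding pfree_fact_def by (auto intro!: prod_coprime_left)
qed

lemma fact_prime_multiple:
  fixes p n :: nat assumes "0 < p"
  shows "(fact (p * n) :: int) = int p ^ n * fact n * pfree_fact p (p * n)"
proof -
  have multiples: "{j \<in> {1..p * n}. p dvd j} = (*) p ` {1..n}"
    using assms by (auto elim!: dvdE)
  have "(fact (p * n) :: int) = (\<Prod>j=1..p * n. int j)"
    by (simp add: fact_prod)
  also have "\<dots> = (\<Prod>j=1..p * n. if p dvd j then int j else 1) * pfree_fact p (p * n)"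
    unfolding pfree_fact_def prod.distrib[symmetric] by (intro prod.cong) (auto simp: pfree_def)
  also have "(\<Prod>j=1..p * n. if p dvd j then int j else 1) = (\<Prod>j\<in>(*) p ` {1..n}. int j)"
    unfolding multiples[symmetric] by (rule prod.inter_filter[symmetric]) simp
  also have "\<dots> = int p ^ n * fact n"
    using assms by (simp add: prod.reindex inj_on_def prod.distrib fact_prod)
  finally show ?thesis .
qed

lemma fact_eq_binomial_int:
  assumes "k \<le> n"
  shows "(fact n :: int) = fact k * fact (n - k) * int (n choose k)"
  using binomial_fact_lemma[OF assms] by (metis of_nat_fact of_nat_mult)

lemma binomial_prime_multiple_pfree:
  fixes p n k :: nat assumes "0 < p" "k \<le> n"
  shows "int (p * n choose p * k) * pfree_fact p (p * k) * pfree_fact p (p * (n - k))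
       = int (n choose k) * pfree_fact p (p * n)"
proof -
  define c :: int where "c = int p ^ n * fact k * fact (n - k)"
  have "c * (int (p * n choose p * k) * pfree_fact p (p * k) * pfree_fact p (p * (n - k)))
      = int (p * n choose p * k) * (int p ^ k * fact k * pfree_fact p (p * k))
          * (int p ^ (n - k) * fact (n - k) * pfree_fact p (p * (n - k)))"
    using assms(2) by (simp add: c_def power_add[symmetric] algebra_simps)
  also have "\<dots> = fact (p * k) * fact (p * n - p * k) * int (p * n choose p * k)"
    using assms(1) by (simp add: fact_prime_multiple diff_mult_distrib2[symmetric])
  also have "\<dots> = fact (p * n)"
    using assms by (intro fact_eq_binomial_int[symmetric]) simp
  also have "\<dots> = int p ^ n * fact n * pfree_fact p (p * n)"
    using assms(1) by (rule fact_prime_multiple)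
  also have "\<dots> = c * (int (n choose k) * pfree_fact p (p * n))"
    using assms(2) by (simp add: c_def fact_eq_binomial_int[of k n] algebra_simps)
  finally show ?thesis
    using assms(1) by (simp add: c_def)
qed

lemma binomial_pred_prime_multiple_pfree:
  fixes p n k :: nat assumes "0 < p" "k \<le> n"
  shows "int (p * n - 1 choose p * k) * pfree_fact p (p * k) * pfree_fact p (p * (n - k))
       = int (n - 1 choose k) * pfree_fact p (p * n)"
proof (cases "n = 0")
  case True
  with assms(2) show ?thesis by simp
next
  case False
  have "int (p * n) * (int (p * n - 1 choose p * k) * pfree_fact p (p * k) * pfree_fact p (p * (n - k)))
      = int (p * (n - k)) * (int (p * n choose p * k) * pfree_fact p (p * k) * pfree_fact p (p * (n - k)))"
    using binomial_absorb_comp[of "p * n" "p * k"]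
    by (simp add: diff_mult_distrib2 flip: of_nat_mult)
  also have "\<dots> = int p * (int (n - k) * int (n choose k)) * pfree_fact p (p * n)"
    using binomial_prime_multiple_pfree[OF assms] by (simp add: ac_simps)
  also have "\<dots> = int (p * n) * (int (n - 1 choose k) * pfree_fact p (p * n))"
    using binomial_absorb_comp[of n k] by (simp flip: of_nat_mult)
  finally show ?thesis
    using assms(1) False by simp
qed

lemma pfree_add_period:
  assumes "p dvd M" "p ^ s dvd M"
  shows "[pfree p (j + M) = pfree p j] (mod int p ^ s)"
proof -
  have "[int (j + M) = int j] (mod int p ^ s)"
    using assms(2) by (simp add: cong_iff_dvd_diff flip: of_nat_power)
  then show ?thesis
    using assms(1) by (simp add: pfree_def dvd_add_left_iff)
qed

lemma pfree_reflect:
  assumes "p dvd M" "p ^ s dvd M" "j \<le> M"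
  shows "[pfree p (M - j) = (if p dvd j then 1 else -1) * pfree p j] (mod int p ^ s)"
proof -
  have "[int (M - j) = - int j] (mod int p ^ s)"
    using assms(2,3) by (simp add: cong_iff_dvd_diff of_nat_diff flip: of_nat_power)
  moreover have "p dvd M - j \<longleftrightarrow> p dvd j"
  proof
    assume "p dvd M - j"
    from dvd_diff_nat[OF assms(1) this] show "p dvd j" using assms(3) by simp
  qed (rule dvd_diff_nat[OF assms(1)])
  ultimately show ?thesis by (simp add: pfree_def)
qed

lemma pfree_fact_add_period:
  assumes "p dvd M" "p ^ s dvd M"
  shows "[pfree_fact p (x + M) = pfree_fact p x * pfree_fact p M] (mod int p ^ s)"
proof (induction x)
  case 0
  then show ?case by simp
next
  case (Suc x)
  have "pfree_fact p (Suc x + M) = pfree_fact p (x + M) * pfree p (Suc x + M)"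
    by (simp add: pfree_fact_Suc)
  also have "[\<dots> = pfree_fact p x * pfree_fact p M * pfree p (Suc x)] (mod int p ^ s)"
    using Suc.IH pfree_add_period[OF assms] by (rule cong_mult)
  also have "pfree_fact p x * pfree_fact p M * pfree p (Suc x) = pfree_fact p (Suc x) * pfree_fact p M"
    by (simp add: pfree_fact_Suc ac_simps)
  finally show ?case .
qed

lemma pfree_fact_mult_period:
  assumes "p dvd M" "p ^ s dvd M"
  shows "[pfree_fact p (M * t) = pfree_fact p M ^ t] (mod int p ^ s)"
proof (induction t)
  case 0
  then show ?case by simp
next
  case (Suc t)
  have "[pfree_fact p (M * t + M) = pfree_fact p (M * t) * pfree_fact p M] (mod int p ^ s)"
    using assms by (rule pfree_fact_add_period)
  also have "[pfree_fact p (M * t) * pfree_fact p M = pfree_fact p M ^ t * pfree_fact p M] (mod int p ^ s)"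
    by (rule cong_mult[OF Suc.IH cong_refl])
  finally show ?case by (simp add: ac_simps)
qed

lemma pfree_fact_reflect_prod:
  assumes "p dvd M" "p ^ s dvd M" "y \<le> M"
  shows "[pfree_fact p M = (\<Prod>i<y. if p dvd i then 1 else -1) * pfree_fact p (M - y) * (\<Prod>i<y. pfree p i)]
           (mod int p ^ s)"
  using assms(3)
proof (induction y)
  case 0
  then show ?case by simp
next
  case (Suc y)
  have "M - y = Suc (M - Suc y)" using Suc.prems by simp
  then have "pfree_fact p (M - y) = pfree_fact p (M - Suc y) * pfree p (M - y)"
    by (simp add: pfree_fact_Suc)
  moreover have "[pfree p (M - y) = (if p dvd y then 1 else -1) * pfree p y] (mod int p ^ s)"
    using assms(1,2) Suc.prems by (intro pfree_reflect) auto
  ultimately have step: "[pfree_fact p (M - y) = pfree_fact p (M - Suc y) * ((if p dvd y then 1 else -1) * pfree p y)]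
      (mod int p ^ s)"
    by (simp add: cong_scalar_left)
  have "[pfree_fact p M = (\<Prod>i<y. if p dvd i then 1 else -1) * pfree_fact p (M - y) * (\<Prod>i<y. pfree p i)]
      (mod int p ^ s)"
    using Suc by simp
  also have "[(\<Prod>i<y. if p dvd i then 1 else -1) * pfree_fact p (M - y) * (\<Prod>i<y. pfree p i)
      = (\<Prod>i<y. if p dvd i then 1 else -1)
          * (pfree_fact p (M - Suc y) * ((if p dvd y then 1 else -1) * pfree p y)) * (\<Prod>i<y. pfree p i)]
      (mod int p ^ s)"
    by (intro cong_mult cong_refl step)
  also have "(\<Prod>i<y. if p dvd i then 1 else -1)
          * (pfree_fact p (M - Suc y) * ((if p dvd y then 1 else -1) * pfree p y)) * (\<Prod>i<y. pfree p i)
      = (\<Prod>i<Suc y. if p dvd i then 1 else -1) * pfree_fact p (M - Suc y) * (\<Prod>i<Suc y. pfree p i)"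
    by (simp only: prod.lessThan_Suc ac_simps)
  finally show ?case .
qed

lemma card_multiples_lessThan:
  fixes p n :: nat assumes "0 < p"
  shows "card {i \<in> {..<p * n}. p dvd i} = n"
proof -
  have "{i \<in> {..<p * n}. p dvd i} = (*) p ` {..<n}"
    using assms by (auto elim!: dvdE)
  then show ?thesis
    using assms by (simp add: card_image inj_on_def)
qed

lemma pfree_fact_reflect:
  assumes "0 < p" "p dvd M" "p ^ s dvd M" "p * n \<le> M"
  shows "[pfree_fact p M = (-1) ^ ((p - 1) * n) * pfree_fact p (M - p * n) * pfree_fact p (p * n)]
           (mod int p ^ s)"
proof -
  have "(\<Prod>i<p * n. if p dvd i then 1 else -1 :: int) = (-1) ^ card ({..<p * n} - {i. p dvd i})"
    by (simp add: prod.If_cases Diff_eq)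
  also have "card ({..<p * n} - {i. p dvd i}) = p * n - card {i \<in> {..<p * n}. p dvd i}"
    by (subst card_Diff_subset_Int) (auto simp: Int_def)
  also have "\<dots> = (p - 1) * n"
    using card_multiples_lessThan[OF assms(1)] by (simp add: diff_mult_distrib)
  finally show ?thesis
    using pfree_fact_reflect_prod[OF assms(2-4)] pfree_fact_eq_prod_lessThan[of p "p * n"] by simp
qed

lemma pfree_fact_pair_cong:
  assumes "0 < p" "p ^ s dvd p * (A + B)"
  shows "[pfree_fact p (p * (A * t)) * pfree_fact p (p * (B * t))
          = (-1) ^ ((p - 1) * (B * t)) * pfree_fact p (p * (A + B)) ^ t] (mod int p ^ s)"
proof -
  define M where "M = p * (A + B)"
  define \<sigma> :: int where "\<sigma> = (-1) ^ ((p - 1) * (B * t))"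
  have M: "p dvd M * t" "p ^ s dvd M * t" "p * (B * t) \<le> M * t"
    using assms(2) by (auto simp: M_def dvd_mult2 mult.assoc[symmetric] intro!: mult_le_mono1)
  have "M * t - p * (B * t) = p * (A * t)"
    by (simp add: M_def algebra_simps)
  then have reflect: "[pfree_fact p (M * t) = \<sigma> * (pfree_fact p (p * (A * t)) * pfree_fact p (p * (B * t)))]
      (mod int p ^ s)"
    using pfree_fact_reflect[OF assms(1) M] by (simp add: \<sigma>_def ac_simps)
  have "pfree_fact p (p * (A * t)) * pfree_fact p (p * (B * t))
      = \<sigma> * (\<sigma> * (pfree_fact p (p * (A * t)) * pfree_fact p (p * (B * t))))"
    by (simp add: \<sigma>_def)
  also have "[\<dots> = \<sigma> * pfree_fact p (M * t)] (mod int p ^ s)"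
    using reflect by (intro cong_scalar_left) (rule cong_sym)
  also have "[\<sigma> * pfree_fact p (M * t) = \<sigma> * pfree_fact p M ^ t] (mod int p ^ s)"
    using assms(2) by (intro cong_scalar_left pfree_fact_mult_period) (simp_all add: M_def)
  finally show ?thesis by (simp add: \<sigma>_def M_def)
qed

lemma binom_pair_prime_multiple_cong:
  assumes p: "prime p" and t: "1 \<le> t" and dvd: "p ^ s dvd p * (A + B)"
  shows "[int (binom_pair t (p * A) (p * B)) = int (binom_pair t A B)] (mod int p ^ s)"
proof -
  obtain u where u: "t = Suc u" using t by (cases t) auto
  have "0 < p" using prime_gt_0_nat[OF p] .
  define W where "W = pfree_fact p"
  define U where "U = W (p * A) * W (p * B) * (W (p * (A * u)) * W (p * (B * u)))"
  define V where "V = W (p * (A * t)) * W (p * (B * t))"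
  have eA: "int (p * (A * t) - 1 choose p * A) * W (p * A) * W (p * (A * u))
      = int (A * t - 1 choose A) * W (p * (A * t))"
    using binomial_pred_prime_multiple_pfree[OF \<open>0 < p\<close>, of A "A * t"] t by (simp add: W_def u)
  have eB: "int (p * (B * t) choose p * B) * W (p * B) * W (p * (B * u))
      = int (B * t choose B) * W (p * (B * t))"
    using binomial_prime_multiple_pfree[OF \<open>0 < p\<close>, of B "B * t"] t by (simp add: W_def u)
  have "int (binom_pair t (p * A) (p * B)) * U
      = (int (p * (A * t) - 1 choose p * A) * W (p * A) * W (p * (A * u)))
        * (int (p * (B * t) choose p * B) * W (p * B) * W (p * (B * u)))"
    unfolding binom_pair_def U_def by (simp add: ac_simps)
  also have "\<dots> = int (binom_pair t A B) * V"
    unfolding eA eB binom_pair_def V_def by (simp add: ac_simps)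
  finally have exact: "int (binom_pair t (p * A) (p * B)) * U = int (binom_pair t A B) * V" .
  have "[U = ((-1) ^ ((p - 1) * B) * W (p * (A + B))) * ((-1) ^ ((p - 1) * (B * u)) * W (p * (A + B)) ^ u)]
      (mod int p ^ s)"
    unfolding U_def W_def
    using cong_mult[OF pfree_fact_pair_cong[OF \<open>0 < p\<close> dvd, of 1]
                       pfree_fact_pair_cong[OF \<open>0 < p\<close> dvd, of u]]
    by simp
  also have "((-1) ^ ((p - 1) * B) * W (p * (A + B))) * ((-1) ^ ((p - 1) * (B * u)) * W (p * (A + B)) ^ u)
      = (-1) ^ ((p - 1) * (B * t)) * W (p * (A + B)) ^ t"
    by (simp add: u algebra_simps power_add)
  also have "[\<dots> = V] (mod int p ^ s)"
    unfolding V_def W_def using pfree_fact_pair_cong[OF \<open>0 < p\<close> dvd, of t] by (rule cong_sym)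
  finally have "[int (binom_pair t (p * A) (p * B)) * U = int (binom_pair t A B) * U] (mod int p ^ s)"
    unfolding exact by (intro cong_scalar_left) (rule cong_sym)
  moreover have "coprime U (int p ^ s)"
    unfolding U_def W_def using coprime_pfree_fact[OF p, of _ 1] by simp
  ultimately show ?thesis by (simp add: cong_mult_rcancel)
qed

lemma neg_one_power_prime_multiple_cong:
  fixes x y :: int
  assumes p: "prime p" and dvd: "p ^ k dvd p * n" and cong: "[x = y] (mod int p ^ k)"
  shows "[(-1) ^ (p * n) * x = (-1) ^ n * y] (mod int p ^ k)"
proof (cases "p = 2 \<and> odd n")
  case True
  have "k \<le> 1"
  proof (rule ccontr)
    assume "\<not> k \<le> 1"
    then have "p ^ 2 dvd p ^ k" by (intro le_imp_power_dvd) simp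
    from dvd_trans[OF this dvd] have "(4::nat) dvd 2 * n"
      using True by simp
    then have "even n" by presburger
    with True show False by simp
  qed
  then have "int p ^ k dvd 2"
    using True by (cases k) auto
  then have "[y = - y] (mod int p ^ k)"
    by (simp add: cong_iff_dvd_diff dvd_mult2 flip: mult_2)
  with True cong show ?thesis
    by (auto intro: cong_trans)
next
  case False
  then have "(-1 :: int) ^ (p * n) = (-1) ^ n"
    using prime_odd_nat[OF p] prime_ge_2_nat[OF p] by (cases "p = 2") (auto simp: minus_one_power_iff)
  with cong show ?thesis by (simp add: cong_scalar_left)
qed

lemma moebius_mult_prime:
  assumes "prime p" "\<not> p dvd e"
  shows "moebius (p * e) = - moebius e"
proof -
  have "0 < e" using assms(2) by (cases e) auto
  have "coprime p e" using assms by (simp add: prime_imp_coprime)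
  then have "squarefree (p * e) \<longleftrightarrow> squarefree e"
    using squarefree_mult_coprime squarefree_prime[OF assms(1)] squarefree_multD(2) by blast
  moreover have "prime_factors (p * e) = insert p (prime_factors e)"
    using prime_factors_product[of p e] assms(1) \<open>0 < e\<close> prime_prime_factors[OF assms(1)] by auto
  moreover have "p \<notin> prime_factors e"
    using assms(2) by (auto simp: in_prime_factors_iff)
  ultimately show ?thesis
    by (simp add: moebius_def)
qed

lemma moebius_mult_prime_dvd:
  assumes "prime p" "p dvd e"
  shows "moebius (p * e) = 0"
proof -
  have "p ^ 2 dvd p * e" using assms(2) by (auto simp: power2_eq_square)
  moreover have "\<not> is_unit p" using assms(1) not_prime_unit by blast
  ultimately have "\<not> squarefree (p * e)" unfolding squarefree_def by blast
  then show ?thesis by (simp add: moebius_def)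
qed

lemma sum_common_divisors_pair_prime_multiples:
  fixes F :: "nat \<Rightarrow> int"
  assumes p: "prime p" and "p dvd m1" "p dvd m2" "0 < m1"
  shows "(\<Sum>d | d dvd m1 \<and> d dvd m2. moebius d * F d)
       = (\<Sum>e | e dvd m1 \<and> e dvd m2 \<and> \<not> p dvd e. moebius e * (F e - F (p * e)))"
proof -
  define D where "D = {d. d dvd m1 \<and> d dvd m2}"
  define D0 where "D0 = {e. e dvd m1 \<and> e dvd m2 \<and> \<not> p dvd e}"
  define g where "g d = moebius d * F d" for d
  have "finite D"
    using \<open>0 < m1\<close> by (auto simp: D_def intro: finite_subset[OF _ finite_divisors_nat])
  have mult_in_D: "p * e \<in> D" if "e \<in> D0" for e
    using that assms prime_imp_coprime[OF p] by (auto simp: D_def D0_def intro: divides_mult)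
  have "sum g D = sum g D0 + sum g (D - D0)"
    using \<open>finite D\<close> by (subst sum.subset_diff[of D0]) (auto simp: D_def D0_def)
  also have "sum g (D - D0) = sum g ((*) p ` D0)"
  proof (rule sum.mono_neutral_right)
    show "finite (D - D0)" using \<open>finite D\<close> by simp
    show "(*) p ` D0 \<subseteq> D - D0"
      using mult_in_D by (auto simp: D0_def)
    show "\<forall>d \<in> D - D0 - (*) p ` D0. g d = 0"
    proof
      fix d assume d: "d \<in> D - D0 - (*) p ` D0"
      then obtain e where e: "d = p * e" by (auto simp: D0_def D_def elim!: dvdE)
      with d have "e dvd m1" "e dvd m2" by (auto simp: D_def intro: dvd_mult_left)
      with d e have "p dvd e" by (auto simp: D0_def)
      with e show "g d = 0" by (simp add: g_def moebius_mult_prime_dvd[OF p])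
    qed
  qed
  also have "sum g ((*) p ` D0) = (\<Sum>e\<in>D0. g (p * e))"
    using prime_gt_0_nat[OF p] by (simp add: sum.reindex inj_on_def)
  also have "sum g D0 + \<dots> = (\<Sum>e\<in>D0. moebius e * (F e - F (p * e)))"
    unfolding sum.distrib[symmetric]
    by (intro sum.cong refl) (simp add: g_def D0_def moebius_mult_prime[OF p] right_diff_distrib)
  finally show ?thesis by (simp add: D_def D0_def g_def)
qed

lemma prime_power_dvd_sum_quotients:
  fixes p k m1 m2 d :: nat
  assumes "prime p" "p ^ k dvd m1 + m2" "\<not> p dvd d" "d dvd m1" "d dvd m2"
  shows "p ^ k dvd m1 div d + m2 div d"
proof -
  have "coprime (p ^ k) d"
    using prime_imp_power_coprime[OF assms(1,3)] by (simp add: coprime_commute)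
  moreover have "m1 + m2 = d * (m1 div d + m2 div d)"
    using assms(4,5) by (simp add: distrib_left)
  ultimately show ?thesis
    using assms(2) by (simp add: coprime_dvd_mult_right_iff)
qed

lemma prime_power_dvd_moebius_sum:
  fixes f :: "nat \<Rightarrow> nat \<Rightarrow> int"
  assumes p: "prime p" and m: "0 < m1" "0 < m2" and dvd: "p ^ k dvd m1 + m2"
    and not_both: "\<And>A B. 0 < A \<Longrightarrow> 0 < B \<Longrightarrow> p ^ k dvd A + B \<Longrightarrow> \<not> (p dvd A \<and> p dvd B)
                     \<Longrightarrow> int p ^ k dvd f A B"
    and multiple: "\<And>A B. 0 < A \<Longrightarrow> 0 < B \<Longrightarrow> p ^ k dvd p * (A + B)
                     \<Longrightarrow> [f (p * A) (p * B) = f A B] (mod int p ^ k)"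
  shows "int p ^ k dvd (\<Sum>d | d dvd m1 \<and> d dvd m2. moebius d * f (m1 div d) (m2 div d))"
proof (cases "p dvd m1 \<and> p dvd m2")
  case False
  show ?thesis
  proof (intro dvd_sum dvd_mult, clarify)
    fix d assume d: "d dvd m1" "d dvd m2"
    then have "\<not> p dvd d" using False dvd_trans by blast
    have "m1 = d * (m1 div d)" "m2 = d * (m2 div d)" using d by simp_all
    then have "\<not> (p dvd m1 div d \<and> p dvd m2 div d)" "0 < m1 div d" "0 < m2 div d"
      using False m by (metis dvd_mult mult_0_right neq0_conv)+
    with prime_power_dvd_sum_quotients[OF p dvd \<open>\<not> p dvd d\<close> d]
    show "int p ^ k dvd f (m1 div d) (m2 div d)"
      by (intro not_both)
  qed
next
  case True
  then have "(\<Sum>d | d dvd m1 \<and> d dvd m2. moebius d * f (m1 div d) (m2 div d))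
      = (\<Sum>e | e dvd m1 \<and> e dvd m2 \<and> \<not> p dvd e.
           moebius e * (f (m1 div e) (m2 div e) - f (m1 div (p * e)) (m2 div (p * e))))"
    using p m by (intro sum_common_divisors_pair_prime_multiples) auto
  also have "int p ^ k dvd \<dots>"
  proof (intro dvd_sum dvd_mult, clarify)
    fix e assume e: "e dvd m1" "e dvd m2" "\<not> p dvd e"
    then have "p * e dvd m1" "p * e dvd m2"
      using True prime_imp_coprime[OF p] by (auto intro: divides_mult)
    then obtain A B where AB: "m1 = p * e * A" "m2 = p * e * B" by (auto elim!: dvdE)
    have "0 < e" using e(3) by (cases e) auto
    then have quotients: "m1 div e = p * A" "m2 div e = p * B" "m1 div (p * e) = A" "m2 div (p * e) = B"
      using AB prime_gt_0_nat[OF p] by (simp_all add: ac_simps)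
    have "p ^ k dvd p * (A + B)"
      using prime_power_dvd_sum_quotients[OF p dvd e(3,1,2)] by (simp add: quotients distrib_left)
    then have "[f (p * A) (p * B) = f A B] (mod int p ^ k)"
      using m AB by (intro multiple) auto
    then show "int p ^ k dvd f (m1 div e) (m2 div e) - f (m1 div (p * e)) (m2 div (p * e))"
      unfolding quotients by (simp add: cong_iff_dvd_diff)
  qed
  finally show ?thesis .
qed

lemma int_dvd_if_prime_powers_dvd:
  fixes n :: nat and x :: int
  assumes "0 < n" "\<And>p k. prime p \<Longrightarrow> p ^ k dvd n \<Longrightarrow> int p ^ k dvd x"
  shows "int n dvd x"
proof (cases "x = 0")
  case False
  show ?thesis
  proof (rule multiplicity_le_imp_dvd)
    show "int n \<noteq> 0" using assms(1) by simp
    fix q :: int assume q: "prime q"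
    define p where "p = nat q"
    have "q = int p" "prime p" using q by (simp_all add: p_def prime_ge_0_int)
    have "q ^ multiplicity q (int n) dvd int n" by (rule multiplicity_dvd)
    then have "p ^ multiplicity q (int n) dvd n"
      using \<open>q = int p\<close> by (simp flip: of_nat_power)
    then have "q ^ multiplicity q (int n) dvd x"
      using assms(2) \<open>prime p\<close> \<open>q = int p\<close> by simp
    then show "multiplicity q (int n) \<le> multiplicity q x"
      using False q by (intro multiplicity_geI) auto
  qed
qed simp

definition signed_binom_pair :: "nat \<Rightarrow> nat \<Rightarrow> nat \<Rightarrow> int" where
  "signed_binom_pair t A B = (-1) ^ ((A + B) * t) * int (binom_pair t A B)"

lemma dvd_moebius_sum_signed_binom_pair:
  assumes "1 \<le> t" "0 < m1" "0 < m2"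
  shows "int (m1 + m2) dvd
           (\<Sum>d | d dvd m1 \<and> d dvd m2. moebius d * signed_binom_pair t (m1 div d) (m2 div d))"
proof (rule int_dvd_if_prime_powers_dvd)
  fix p k assume p: "prime p" and dvd: "p ^ k dvd m1 + m2"
  show "int p ^ k dvd (\<Sum>d | d dvd m1 \<and> d dvd m2. moebius d * signed_binom_pair t (m1 div d) (m2 div d))"
  proof (rule prime_power_dvd_moebius_sum[OF p assms(2,3) dvd])
    fix A B :: nat
    assume "0 < A" "p ^ k dvd A + B" "\<not> (p dvd A \<and> p dvd B)"
    then have "p ^ k dvd binom_pair t A B"
      using p assms(1) by (intro prime_power_dvd_binom_pair) auto
    then show "int p ^ k dvd signed_binom_pair t A B"
      unfolding signed_binom_pair_def by (intro dvd_mult) (simp flip: of_nat_power)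
  next
    fix A B :: nat
    assume "p ^ k dvd p * (A + B)"
    then have "p ^ k dvd p * ((A + B) * t)"
      by (simp add: mult.assoc[symmetric] dvd_mult2)
    moreover have "[int (binom_pair t (p * A) (p * B)) = int (binom_pair t A B)] (mod int p ^ k)"
      using p assms(1) \<open>p ^ k dvd p * (A + B)\<close> by (rule binom_pair_prime_multiple_cong)
    moreover have "(p * A + p * B) * t = p * ((A + B) * t)"
      by (simp add: algebra_simps)
    ultimately show "[signed_binom_pair t (p * A) (p * B) = signed_binom_pair t A B] (mod int p ^ k)"
      unfolding signed_binom_pair_def using neg_one_power_prime_multiple_cong[OF p] by metis
  qed
qed (use assms in simp)

definition DT_factor :: "int \<Rightarrow> nat \<Rightarrow> nat \<Rightarrow> int" where
  "DT_factor \<tau> A B =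
     neg_one_pow ((int A + int B) * (\<tau> + 1))
       * binom_int (int A * (\<tau> + 1) - 1) A * binom_int (int B * (\<tau> + 1)) B"

lemma neg_one_pow_of_nat: "neg_one_pow (int n) = (-1) ^ n"
  by (simp add: neg_one_pow_def minus_one_power_iff)

lemma binom_int_of_nat: "binom_int (int n) b = int (n choose b)"
  by (simp add: binom_int_def)

lemma binom_int_neg:
  "a < 0 \<Longrightarrow> 0 < b \<Longrightarrow> binom_int a b = (-1) ^ b * int (nat (- a + int b - 1) choose b)"
  by (simp add: binom_int_def)

lemma DT_factor_nonneg:
  assumes "0 \<le> \<tau>" "0 < A"
  shows "DT_factor \<tau> A B = signed_binom_pair (nat (\<tau> + 1)) A B"
proof -
  obtain t where t: "\<tau> + 1 = int t" "1 \<le> t"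
    using assms(1) by (intro that[of "nat (\<tau> + 1)"]) auto
  have "int A * int t - 1 = int (A * t - 1)"
    using assms(2) t(2) by (simp add: of_nat_diff)
  then show ?thesis
    by (simp add: DT_factor_def signed_binom_pair_def binom_pair_def t neg_one_pow_of_nat binom_int_of_nat
        flip: of_nat_add of_nat_mult)
qed

(* Upper negation C(a,b) = (-1)^b C(b-a-1,b) turns tau < 0 into -tau-1 >= 0 with A and B exchanged. *)
lemma DT_factor_neg:
  assumes "\<tau> < 0" "0 < A" "0 < B"
  shows "DT_factor \<tau> A B = signed_binom_pair (nat (- \<tau>)) B A"
proof -
  obtain u where u: "\<tau> + 1 = - int u" "nat (- \<tau>) = u + 1"
    using assms(1) by (intro that[of "nat (- \<tau> - 1)"]) auto
  have "binom_int (- int (A * u) - 1) A = (-1) ^ A * int (A * (u + 1) choose A)"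
  proof -
    have eq: "- (- int (A * u) - 1) + int A - 1 = int (A * (u + 1))"
      by (simp add: ring_distribs)
    have "- int (A * u) - 1 < 0" using of_nat_0_le_iff[of "A * u"] by linarith
    from binom_int_neg[OF this assms(2)] show ?thesis
      unfolding eq nat_int .
  qed
  moreover have "binom_int (- int (B * u)) B = (-1) ^ B * int (B * (u + 1) - 1 choose B)"
  proof (cases "u = 0")
    case True
    then show ?thesis using assms(3) by (simp add: binom_int_of_nat[of 0, simplified] binomial_eq_0)
  next
    case False
    have eq: "- (- int (B * u)) + int B - 1 = int (B * (u + 1) - 1)"
      using assms(3) False by (simp add: algebra_simps of_nat_diff)
    have "- int (B * u) < 0" using assms(3) False by simp
    from binom_int_neg[OF this assms(3)] show ?thesis
      unfolding eq nat_int .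
  qed
  moreover have "neg_one_pow ((int A + int B) * - int u) = (-1) ^ ((A + B) * u)"
    using neg_one_pow_of_nat[of "(A + B) * u"] by (simp add: neg_one_pow_def)
  ultimately show ?thesis
    unfolding DT_factor_def signed_binom_pair_def binom_pair_def u
    by (simp add: algebra_simps power_add)
qed

lemma n_DT_eq_sum_DT_factor:
  "n_DT m1 m2 \<tau>
     = real_of_int (\<Sum>d | d dvd m1 \<and> d dvd m2. moebius d * DT_factor \<tau> (m1 div d) (m2 div d))
       / real (m1 + m2)"
proof -
  have quotients:
    "(int m1 + int m2) * (\<tau> + 1) div int d = (int (m1 div d) + int (m2 div d)) * (\<tau> + 1)"
    "(int m1 * \<tau> + int m1) div int d = int (m1 div d) * (\<tau> + 1)"
    "(int m2 * \<tau> + int m2) div int d = int (m2 div d) * (\<tau> + 1)"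
    if "d dvd m1" "d dvd m2" for d
    using that by (auto simp: algebra_simps elim!: dvdE)
  have summand:
    "moebius d * neg_one_pow ((int m1 + int m2) * (\<tau> + 1) div int d)
       * binom_int ((int m1 * \<tau> + int m1) div int d - 1) (m1 div d)
       * binom_int ((int m2 * \<tau> + int m2) div int d) (m2 div d)
     = moebius d * DT_factor \<tau> (m1 div d) (m2 div d)"
    if "d \<in> {d. d dvd m1 \<and> d dvd m2}" for d
    using that by (simp only: mem_Collect_eq DT_factor_def quotients mult.assoc)
  show ?thesis
    unfolding n_DT_def by (simp only: summand cong: sum.cong) (simp add: of_int_sum)
qed

lemma dvd_sum_DT_factor:
  assumes "0 < m1" "0 < m2"
  shows "int (m1 + m2) dvd (\<Sum>d | d dvd m1 \<and> d dvd m2. moebius d * DT_factor \<tau> (m1 div d) (m2 div d))"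
proof -
  have quotients_pos: "0 < m1 div d" "0 < m2 div d" if "d dvd m1" "d dvd m2" for d
    using that assms by (auto elim!: dvdE)
  show ?thesis
  proof (cases "0 \<le> \<tau>")
    case True
    then have "(\<Sum>d | d dvd m1 \<and> d dvd m2. moebius d * DT_factor \<tau> (m1 div d) (m2 div d))
        = (\<Sum>d | d dvd m1 \<and> d dvd m2. moebius d * signed_binom_pair (nat (\<tau> + 1)) (m1 div d) (m2 div d))"
      using quotients_pos by (auto simp: DT_factor_nonneg intro!: sum.cong)
    then show ?thesis
      using dvd_moebius_sum_signed_binom_pair[of "nat (\<tau> + 1)" m1 m2] assms True by simp
  next
    case False
    then have "(\<Sum>d | d dvd m1 \<and> d dvd m2. moebius d * DT_factor \<tau> (m1 div d) (m2 div d))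
        = (\<Sum>d | d dvd m2 \<and> d dvd m1. moebius d * signed_binom_pair (nat (- \<tau>)) (m2 div d) (m1 div d))"
      using quotients_pos by (auto simp: DT_factor_neg conj_commute intro!: sum.cong)
    then show ?thesis
      using dvd_moebius_sum_signed_binom_pair[of "nat (- \<tau>)" m2 m1] assms False
      by (simp add: add.commute)
  qed
qed

theorem theorem1p3:
  fixes \<tau> :: int and m1 m2 :: nat
  assumes "m1 \<ge> 1" and "m2 \<ge> 1"
  shows "n_DT m1 m2 \<tau> \<in> \<int>"
proof -
  obtain c
    where "(\<Sum>d | d dvd m1 \<and> d dvd m2. moebius d * DT_factor \<tau> (m1 div d) (m2 div d)) = int (m1 + m2) * c"
    using dvd_sum_DT_factor[of m1 m2 \<tau>] assms by (auto elim!: dvdE)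
  then have "n_DT m1 m2 \<tau> = of_int c"
    using assms by (simp add: n_DT_eq_sum_DT_factor)
  then show ?thesis by simp
qed

end
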